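(* Consider a Behavioral Security Game on an attack graph $G=(V,\mathcal{E})$ with source $v_s$ and a finite set $\mathcal{D}$ of defenders. Assume every edge attack success probability function $p_{i,j}$ is log-convex, strictly decreasing, and twice continuously differentiable on $[0,\infty)$, and that $\alpha_k\in(0,1]$ for each defender $D_k$. Then the game possesses a pure strategy Nash equilibrium, i.e., a profile $\bar{\mathbf{x}}=(\bar x_k)_{D_k\in\mathcal{D}}$ with $\bar x_k\in X_k$ and $C_k(\bar x_k,\bar{\mathbf{x}}_{-k})\le C_k(x_k,\bar{\mathbf{x}}_{-k})$ for all $x_k\in X_k$ and all $D_k\in\mathcal{D}$.
   Context: An attack graph is a finite directed graph $G=(V,\mathcal{E})$ with a designated source node $v_s$; $\mathcal{P}_m$ is the set of directed paths from $v_s$ to node $v_m$ (as sets of edges); every asset is assumed reachable from $v_s$. Each defender $D_k$ owns assets $V_k\subseteq V\setminus\{v_s\}$, each $v_m$ with loss $L_m\in[0,\infty)$, and has budget $B_k\ge0$ and strategy set $X_k=\{x_k\in\mathbb{R}^{|\mathcal{E}|}_{\ge0}:\mathbf{1}^Tx_k\le B_k\}$, where $x^k_{i,j}$ is $D_k$'s investment on edge $(v_i,v_j)$. The total investment on an edge is $x_{i,j}=\sum_{D_k\in\mathcal{D}}x^k_{i,j}$, and $p_{i,j}:[0,\infty)\to[0,1]$ maps it to the attack success probability, with $p_{i,j}(0)\in(0,1]$. Defender $D_k$ perceives probabilities through the Prelec weighting $w_k(p)=\exp[-(-\log p)^{\alpha_k}]$ and has perceived expected cost $$C_k(x_k,\mathbf{x}_{-k})=\sum_{v_m\in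 V_k}L_m\max_{P\in\mathcal{P}_m}\prod_{(v_i,v_j)\in P}w_k\big(p_{i,j}(x_{i,j})\big).$$ *)

theory Defs
  imports "HOL-Analysis.Analysis"
begin

definition is_path :: "('v \<times> 'v) set \<Rightarrow> 'v \<Rightarrow> 'v \<Rightarrow> 'v list \<Rightarrow> bool" where
  "is_path E s t vs \<longleftrightarrow> vs \<noteq> [] \<and> hd vs = s \<and> last vs = t \<and> distinct vs \<and>
     (\<forall>i. Suc i < length vs \<longrightarrow> (vs ! i, vs ! Suc i) \<in> E)"

definition path_edges :: "'v list \<Rightarrow> ('v \<times> 'v) set" where
  "path_edges vs = set (zip vs (tl vs))"

definition paths :: "('v \<times> 'v) set \<Rightarrow> 'v \<Rightarrow> 'v \<Rightarrow> ('v \<times> 'v) set set" where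
  "paths E s t = path_edges ` {vs. is_path E s t vs}"

definition prelec :: "real \<Rightarrow> real \<Rightarrow> real" where
  "prelec \<alpha> p = exp (- ((- ln p) powr \<alpha>))"

definition log_convex_nonneg :: "(real \<Rightarrow> real) \<Rightarrow> bool" where
  "log_convex_nonneg f \<longleftrightarrow> (\<forall>x\<ge>0. f x > 0) \<and> convex_on {0..} (\<lambda>x. ln (f x))"

definition strictly_decreasing_nonneg :: "(real \<Rightarrow> real) \<Rightarrow> bool" where
  "strictly_decreasing_nonneg f \<longleftrightarrow> (\<forall>x y. 0 \<le> x \<longrightarrow> x < y \<longrightarrow> f y < f x)"

definition C2_nonneg :: "(real \<Rightarrow> real) \<Rightarrow> bool" where
  "C2_nonneg f \<longleftrightarrow> (\<exists>f' f''. (\<forall>x\<ge>0. (f has_real_derivative f' x) (at x within {0..}) \<and>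
                                     (f' has_real_derivative f'' x) (at x within {0..}))
                               \<and> continuous_on {0..} f'')"

definition strategies :: "('v \<times> 'v) set \<Rightarrow> real \<Rightarrow> (('v \<times> 'v) \<Rightarrow> real) set" where
  "strategies E B = {x. (\<forall>e. 0 \<le> x e) \<and> (\<forall>e. e \<notin> E \<longrightarrow> x e = 0) \<and> sum x E \<le> B}"

definition total_inv :: "'d set \<Rightarrow> ('d \<Rightarrow> ('v \<times> 'v) \<Rightarrow> real) \<Rightarrow> ('v \<times> 'v) \<Rightarrow> real" where
  "total_inv D x e = (\<Sum>k\<in>D. x k e)"

definition cost :: "('v \<times> 'v) set \<Rightarrow> 'v \<Rightarrow> 'd set \<Rightarrow> ('d \<Rightarrow> 'v set) \<Rightarrow> ('v \<Rightarrow> real)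
     \<Rightarrow> ('d \<Rightarrow> real) \<Rightarrow> (('v \<times> 'v) \<Rightarrow> real \<Rightarrow> real) \<Rightarrow> 'd \<Rightarrow> ('d \<Rightarrow> ('v \<times> 'v) \<Rightarrow> real) \<Rightarrow> real" where
  "cost E s D assets L \<alpha> p k x =
     (\<Sum>m\<in>assets k. L m * Max ((\<lambda>P. \<Prod>e\<in>P. prelec (\<alpha> k) (p e (total_inv D x e))) ` paths E s m))"

end

(*
  Profiles of all defenders are finitely supported functions on D \<times> E, so Brouwer's fixed point
  theorem applies to compact convex sets of them: a closed ball of such functions is contractible
  while its sphere is not (it is homeomorphic to a standard sphere), and the nearest-point map
  retracts the ball onto any compact convex subset.

  Since 0 < \<alpha> \<le> 1 and p is log-convex, t \<mapsto> (- ln p(t)) powr \<alpha> is concave, so each weighted edge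
  probability is log-convex, the perceived probability of a path is a convex function of the own
  investment, and so is C_k (a nonnegative combination of maxima of such functions).  The
  regularised best response, argmin over y \<in> X_k of C_k(y, x_{-k}) + |y - x_k|\<^sup>2, is therefore
  unique and, by a Berge-type argument, continuous in the whole profile x.  A Brouwer fixed point
  of the joint regularised best response is a Nash equilibrium, because a point that is its own
  proximal image under a convex function minimises that function.
*)
theory Submission
  imports Defs "HOL-Homology.Homology" "HOL-Library.Quadratic_Discriminant"
begin

text \<open>The library notions \<open>convex\<close> and \<open>convex_on\<close> need a \<open>real_vector\<close> instance, which function
  types lack; \<open>fconvex\<close> and \<open>fconvex_on\<close> are their pointwise counterparts.\<close>

definition mix :: "real \<Rightarrow> ('i \<Rightarrow> real) \<Rightarrow> ('i \<Rightarrow> real) \<Rightarrow> 'i \<Rightarrow> real" where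
  "mix t x y = (\<lambda>i. t * x i + (1 - t) * y i)"

definition fconvex :: "('i \<Rightarrow> real) set \<Rightarrow> bool" where
  "fconvex K \<longleftrightarrow> (\<forall>x\<in>K. \<forall>y\<in>K. \<forall>t. 0 \<le> t \<longrightarrow> t \<le> 1 \<longrightarrow> mix t x y \<in> K)"

definition fconvex_on :: "('i \<Rightarrow> real) set \<Rightarrow> (('i \<Rightarrow> real) \<Rightarrow> real) \<Rightarrow> bool" where
  "fconvex_on K f \<longleftrightarrow>
     (\<forall>x\<in>K. \<forall>y\<in>K. \<forall>t. 0 \<le> t \<longrightarrow> t \<le> 1 \<longrightarrow> f (mix t x y) \<le> t * f x + (1 - t) * f y)"

lemma fconvexD: "fconvex K \<Longrightarrow> x \<in> K \<Longrightarrow> y \<in> K \<Longrightarrow> 0 \<le> t \<Longrightarrow> t \<le> 1 \<Longrightarrow> mix t x y \<in> K"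
  by (simp add: fconvex_def)

lemma fconvex_onD:
  "fconvex_on K f \<Longrightarrow> x \<in> K \<Longrightarrow> y \<in> K \<Longrightarrow> 0 \<le> t \<Longrightarrow> t \<le> 1 \<Longrightarrow>
     f (mix t x y) \<le> t * f x + (1 - t) * f y"
  by (simp add: fconvex_on_def)

lemma mix_self [simp]: "mix t x x = x"
  by (simp add: fun_eq_iff mix_def algebra_simps)

lemma curry_mix: "curry (mix t u v) k = mix t (curry u k) (curry v k)"
  by (simp add: fun_eq_iff mix_def)

lemma fconvex_on_subset: "fconvex_on K f \<Longrightarrow> K' \<subseteq> K \<Longrightarrow> fconvex_on K' f"
  by (auto simp: fconvex_on_def)

lemma fconvex_on_Max:
  assumes "finite A" "A \<noteq> {}" "\<And>a. a \<in> A \<Longrightarrow> fconvex_on K (f a)"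
  shows "fconvex_on K (\<lambda>z. Max ((\<lambda>a. f a z) ` A))"
  unfolding fconvex_on_def
proof (intro ballI allI impI)
  fix x y and t :: real assume xy: "x \<in> K" "y \<in> K" and t: "0 \<le> t" "t \<le> 1"
  show "Max ((\<lambda>a. f a (mix t x y)) ` A)
      \<le> t * Max ((\<lambda>a. f a x) ` A) + (1 - t) * Max ((\<lambda>a. f a y) ` A)"
  proof (rule Max.boundedI)
    fix r assume "r \<in> (\<lambda>a. f a (mix t x y)) ` A"
    then obtain a where a: "a \<in> A" and r: "r = f a (mix t x y)" by blast
    have "r \<le> t * f a x + (1 - t) * f a y"
      using fconvex_onD[OF assms(3)[OF a] xy t] by (simp add: r)
    also have "\<dots> \<le> t * Max ((\<lambda>a. f a x) ` A) + (1 - t) * Max ((\<lambda>a. f a y) ` A)"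
      using a assms(1) t by (intro add_mono mult_left_mono Max_ge) auto
    finally show "r \<le> t * Max ((\<lambda>a. f a x) ` A) + (1 - t) * Max ((\<lambda>a. f a y) ` A)" .
  qed (use assms(1,2) in auto)
qed

lemma fconvex_on_weighted_sum:
  assumes "\<And>m. m \<in> M \<Longrightarrow> 0 \<le> c m" "\<And>m. m \<in> M \<Longrightarrow> fconvex_on K (f m)"
  shows "fconvex_on K (\<lambda>z. \<Sum>m\<in>M. c m * f m z)"
  unfolding fconvex_on_def
proof (intro ballI allI impI)
  fix x y and t :: real assume xy: "x \<in> K" "y \<in> K" and t: "0 \<le> t" "t \<le> 1"
  have "(\<Sum>m\<in>M. c m * f m (mix t x y)) \<le> (\<Sum>m\<in>M. c m * (t * f m x + (1 - t) * f m y))"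
    using assms fconvex_onD[OF _ xy t] by (intro sum_mono mult_left_mono) auto
  also have "\<dots> = (\<Sum>m\<in>M. t * (c m * f m x) + (1 - t) * (c m * f m y))"
    by (rule sum.cong) (simp_all add: algebra_simps)
  also have "\<dots> = t * (\<Sum>m\<in>M. c m * f m x) + (1 - t) * (\<Sum>m\<in>M. c m * f m y)"
    by (simp add: sum.distrib sum_distrib_left)
  finally show "(\<Sum>m\<in>M. c m * f m (mix t x y))
      \<le> t * (\<Sum>m\<in>M. c m * f m x) + (1 - t) * (\<Sum>m\<in>M. c m * f m y)" .
qed

definition supported_on :: "'i set \<Rightarrow> ('i \<Rightarrow> real) set" where
  "supported_on I = {x. \<forall>i. i \<notin> I \<longrightarrow> x i = 0}"

definition sqdist_on :: "'i set \<Rightarrow> ('i \<Rightarrow> real) \<Rightarrow> ('i \<Rightarrow> real) \<Rightarrow> real" where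
  "sqdist_on I x y = (\<Sum>i\<in>I. (x i - y i)\<^sup>2)"

lemma sqdist_on_nonneg: "0 \<le> sqdist_on I x y"
  by (simp add: sqdist_on_def sum_nonneg)

lemma sqdist_on_self [simp]: "sqdist_on I x x = 0"
  by (simp add: sqdist_on_def)

lemma sqdist_on_pos:
  assumes "finite I" "x \<in> supported_on I" "y \<in> supported_on I" "x \<noteq> y"
  shows "0 < sqdist_on I x y"
proof -
  obtain i where i: "x i \<noteq> y i" using assms(4) by (auto simp: fun_eq_iff)
  have "i \<in> I"
  proof (rule ccontr)
    assume "i \<notin> I"
    then have "x i = 0" "y i = 0" using assms(2,3) by (auto simp: supported_on_def)
    with i show False by simp
  qed
  then have "(x i - y i)\<^sup>2 \<le> sqdist_on I x y"
    unfolding sqdist_on_def using assms(1) by (intro member_le_sum) auto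
  moreover have "0 < (x i - y i)\<^sup>2" using i by simp
  ultimately show ?thesis by linarith
qed

lemma sqdist_on_mix_left: "sqdist_on I (mix t x y) y = t\<^sup>2 * sqdist_on I x y"
  by (simp add: sqdist_on_def mix_def sum_distrib_left power2_eq_square algebra_simps)

lemma sqdist_on_mix_half:
  "4 * sqdist_on I (mix (1/2) x y) a = 2 * (sqdist_on I x a + sqdist_on I y a) - sqdist_on I x y"
proof -
  have "4 * sqdist_on I (mix (1/2) x y) a = (\<Sum>i\<in>I. 4 * (1/2 * x i + (1 - 1/2) * y i - a i)\<^sup>2)"
    by (simp add: sqdist_on_def mix_def sum_distrib_left)
  also have "\<dots> = (\<Sum>i\<in>I. 2 * (x i - a i)\<^sup>2 + 2 * (y i - a i)\<^sup>2 - (x i - y i)\<^sup>2)"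
    by (rule sum.cong) (simp_all add: power2_eq_square field_simps)
  finally show ?thesis
    by (simp add: sqdist_on_def sum.distrib sum_subtractf sum_distrib_left)
qed

lemma continuous_on_coordinate [continuous_intros]: "continuous_on S (\<lambda>x. x i)"
  by (rule continuous_on_subset[OF continuous_on_product_coordinates subset_UNIV])

lemma continuous_on_fst_coordinate [continuous_intros]: "continuous_on S (\<lambda>z. fst z i)"
  by (rule continuous_on_compose2[OF continuous_on_coordinate continuous_on_fst[OF continuous_on_id]]) auto

lemma continuous_on_snd_coordinate [continuous_intros]: "continuous_on S (\<lambda>z. snd z i)"
  by (rule continuous_on_compose2[OF continuous_on_coordinate continuous_on_snd[OF continuous_on_id]]) auto

lemma continuous_on_curry [continuous_intros]: "continuous_on S (\<lambda>u. curry u k)"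
  by (intro continuous_on_coordinatewise_then_product) (simp add: curry_def continuous_on_coordinate)

lemma continuous_on_sqdist_on [continuous_intros]:
  assumes "continuous_on S x" "continuous_on S y"
  shows "continuous_on S (\<lambda>z. sqdist_on I (x z) (y z))"
  unfolding sqdist_on_def
  using continuous_on_product_then_coordinatewise[OF assms(1)]
    continuous_on_product_then_coordinatewise[OF assms(2)]
  by (intro continuous_on_sum continuous_on_power continuous_on_diff)

lemma continuous_on_Max:
  fixes f :: "'i \<Rightarrow> 'a::topological_space \<Rightarrow> real"
  assumes "finite A" "A \<noteq> {}" "\<And>a. a \<in> A \<Longrightarrow> continuous_on S (f a)"
  shows "continuous_on S (\<lambda>x. Max ((\<lambda>a. f a x) ` A))"
  using assms
proof (induction A rule: finite_ne_induct)
  case (insert a A)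
  have "continuous_on S (\<lambda>x. max (f a x) (Max ((\<lambda>a. f a x) ` A)))"
    using insert by (intro continuous_on_max) auto
  then show ?case using insert by simp
qed simp

lemma continuous_on_unique_argmin:
  fixes F :: "'a::topological_space \<Rightarrow> 'b::topological_space \<Rightarrow> real" and g :: "'a \<Rightarrow> 'b"
  assumes T: "compact T"
    and cF: "continuous_on (S \<times> T) (\<lambda>z. F (fst z) (snd z))"
    and gT: "\<And>x. x \<in> S \<Longrightarrow> g x \<in> T"
    and gmin: "\<And>x z. x \<in> S \<Longrightarrow> z \<in> T \<Longrightarrow> F x (g x) \<le> F x z"
    and uniq: "\<And>x y. x \<in> S \<Longrightarrow> y \<in> T \<Longrightarrow> (\<forall>z\<in>T. F x y \<le> F x z) \<Longrightarrow> y = g x"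
  shows "continuous_on S g"
  \<comment> \<open>The graph of \<open>g\<close> is closed in \<open>S \<times> T\<close>, and projecting along the compact factor
    is a closed map.\<close>
proof (cases "T = {}")
  case True
  then have "S = {}" using gT by blast
  then show ?thesis by simp
next
  case False
  define Gr where "Gr = (\<Inter>w\<in>T. (S \<times> T) \<inter> (\<lambda>z. F (fst z) (snd z) - F (fst z) w) -` {..0})"
  have Gr_closed: "closedin (top_of_set (S \<times> T)) Gr"
    unfolding Gr_def
  proof (rule closedin_INT[OF False])
    fix w assume "w \<in> T"
    then have "continuous_on (S \<times> T) (\<lambda>z. F (fst z) w)"
      by (intro continuous_on_compose2[OF cF, of _ "\<lambda>z. (fst z, w)", simplified])
        (auto intro!: continuous_intros)
    then show "closedin (top_of_set (S \<times> T))
        ((S \<times> T) \<inter> (\<lambda>z. F (fst z) (snd z) - F (fst z) w) -` {..0})"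
      by (intro continuous_closedin_preimage continuous_intros cF) auto
  qed
  have Gr_iff: "(x, y) \<in> Gr \<longleftrightarrow> x \<in> S \<and> y = g x" for x y
    using False gT gmin uniq by (auto simp: Gr_def)
  have closed_fst: "closed_map (top_of_set (S \<times> T)) (top_of_set S) fst"
    using closed_map_fst[of "top_of_set T" "top_of_set S"] T
    by (simp add: compact_space_subtopology compactin_euclidean_iff)
  have "closedin (top_of_set S) (S \<inter> g -` U)" if U: "closedin (top_of_set T) U" for U
  proof -
    have "S \<inter> g -` U = fst ` (Gr \<inter> (S \<times> U))"
      using closedin_imp_subset[OF U] gT by (auto simp: Gr_iff image_iff intro!: bexI[where x="(_, g _)"])
    moreover have "closedin (top_of_set (S \<times> T)) (Gr \<inter> (S \<times> U))"
      using U by (intro closedin_Int Gr_closed closedin_Times) auto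
    ultimately show ?thesis using closed_fst by (simp add: closed_map_def)
  qed
  moreover have "g \<in> S \<rightarrow> T" using gT by blast
  ultimately show ?thesis by (simp add: continuous_on_closed_gen)
qed

section \<open>Proximal maps\<close>

definition prox ::
  "'i set \<Rightarrow> ('i \<Rightarrow> real) set \<Rightarrow> (('i \<Rightarrow> real) \<Rightarrow> real) \<Rightarrow> ('i \<Rightarrow> real) \<Rightarrow> 'i \<Rightarrow> real"
  where "prox I T f a = arg_min_on (\<lambda>y. f y + sqdist_on I y a) T"

lemma is_arg_min_prox:
  assumes "compact T" "T \<noteq> {}" "continuous_on T f"
  shows "is_arg_min (\<lambda>y. f y + sqdist_on I y a) (\<lambda>y. y \<in> T) (prox I T f a)"
proof -
  have "continuous_on T (\<lambda>y. f y + sqdist_on I y a)"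
    by (intro continuous_intros assms(3))
  then obtain y where "y \<in> T" "\<forall>z\<in>T. f y + sqdist_on I y a \<le> f z + sqdist_on I z a"
    using continuous_attains_inf[OF assms(1,2)] by blast
  then have "is_arg_min (\<lambda>y. f y + sqdist_on I y a) (\<lambda>y. y \<in> T) y"
    by (simp add: is_arg_min_linorder)
  then show ?thesis
    unfolding prox_def arg_min_on_def arg_min_def
    by (rule someI[of "is_arg_min (\<lambda>y. f y + sqdist_on I y a) (\<lambda>y. y \<in> T)"])
qed

lemma is_arg_min_prox_unique:
  assumes "finite I" "fconvex T" "T \<subseteq> supported_on I" "fconvex_on T f"
    and y1: "is_arg_min (\<lambda>y. f y + sqdist_on I y a) (\<lambda>y. y \<in> T) y1"
    and y2: "is_arg_min (\<lambda>y. f y + sqdist_on I y a) (\<lambda>y. y \<in> T) y2"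
  shows "y1 = y2"
proof (rule ccontr)
  assume "y1 \<noteq> y2"
  have T: "y1 \<in> T" "y2 \<in> T" using y1 y2 by (auto simp: is_arg_min_def)
  define m where "m = mix (1/2) y1 y2"
  have "m \<in> T" unfolding m_def by (rule fconvexD[OF assms(2) T]) auto
  have "4 * sqdist_on I m a = 2 * (sqdist_on I y1 a + sqdist_on I y2 a) - sqdist_on I y1 y2"
    unfolding m_def by (rule sqdist_on_mix_half)
  moreover have "f m \<le> (f y1 + f y2) / 2"
    using fconvex_onD[OF assms(4) T, of "1/2"] by (simp add: m_def)
  moreover have "0 < sqdist_on I y1 y2"
    using T assms(1,3) \<open>y1 \<noteq> y2\<close> by (intro sqdist_on_pos) auto
  moreover have "f y1 + sqdist_on I y1 a \<le> f m + sqdist_on I m a"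
    "f y2 + sqdist_on I y2 a \<le> f m + sqdist_on I m a"
    using y1 y2 \<open>m \<in> T\<close> by (auto simp: is_arg_min_linorder)
  ultimately show False by argo
qed

lemma continuous_on_prox:
  assumes I: "finite I" and T: "compact T" "fconvex T" "T \<subseteq> supported_on I" "T \<noteq> {}"
    and F: "continuous_on (S \<times> T) (\<lambda>z. F (fst z) (snd z))" "\<And>x. x \<in> S \<Longrightarrow> fconvex_on T (F x)"
    and a: "continuous_on S a"
  shows "continuous_on S (\<lambda>x. prox I T (F x) (a x))"
proof -
  have F_cont: "continuous_on T (F x)" if "x \<in> S" for x
  proof -
    have "continuous_on T (\<lambda>y. (x, y))" by (intro continuous_intros)
    moreover have "(\<lambda>y. (x, y)) ` T \<subseteq> S \<times> T" using that by blast
    ultimately show ?thesis using continuous_on_compose2[OF F(1)] by fastforce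
  qed
  let ?G = "\<lambda>x y. F x y + sqdist_on I y (a x)"
  have argmin: "is_arg_min (?G x) (\<lambda>y. y \<in> T) (prox I T (F x) (a x))" if "x \<in> S" for x
    using is_arg_min_prox[OF T(1,4) F_cont[OF that]] .
  show ?thesis
  proof (rule continuous_on_unique_argmin[OF T(1), where F = ?G])
    have "continuous_on (S \<times> T) (\<lambda>z. a (fst z))"
      by (rule continuous_on_compose2[OF a continuous_on_fst[OF continuous_on_id]]) auto
    then show "continuous_on (S \<times> T) (\<lambda>z. ?G (fst z) (snd z))"
      by (intro continuous_on_add F(1) continuous_on_sqdist_on continuous_on_snd continuous_on_id)
    fix x assume x: "x \<in> S"
    show "prox I T (F x) (a x) \<in> T" "\<And>z. z \<in> T \<Longrightarrow> ?G x (prox I T (F x) (a x)) \<le> ?G x z"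
      using argmin[OF x] by (auto simp: is_arg_min_linorder)
    show "y = prox I T (F x) (a x)" if "y \<in> T" "\<forall>z\<in>T. ?G x y \<le> ?G x z" for y
    proof (rule is_arg_min_prox_unique[OF I T(2,3) F(2)[OF x]])
      show "is_arg_min (?G x) (\<lambda>y. y \<in> T) y" using that by (simp add: is_arg_min_linorder)
    qed (rule argmin[OF x])
  qed
qed

lemma is_arg_min_prox_center_imp_min:
  assumes T: "fconvex T" and f: "fconvex_on T f"
    and a: "is_arg_min (\<lambda>y. f y + sqdist_on I y a) (\<lambda>y. y \<in> T) a" and y: "y \<in> T"
  shows "f a \<le> f y"
proof -
  have aT: "a \<in> T" using a by (simp add: is_arg_min_def)
  define Q where "Q = sqdist_on I y a"
  have Q: "0 \<le> Q" by (simp add: Q_def sqdist_on_nonneg)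
  have le_t: "f a - f y \<le> t * Q" if t: "0 < t" "t \<le> 1" for t
  proof -
    have "mix t y a \<in> T" using fconvexD[OF T y aT] t by simp
    then have "f a + sqdist_on I a a \<le> f (mix t y a) + sqdist_on I (mix t y a) a"
      using a unfolding is_arg_min_linorder by blast
    then have "f a \<le> f (mix t y a) + t\<^sup>2 * Q"
      by (simp add: sqdist_on_mix_left Q_def)
    also have "\<dots> \<le> t * f y + (1 - t) * f a + t\<^sup>2 * Q"
      using fconvex_onD[OF f y aT] t by simp
    finally have "t * (f a - f y) \<le> t * (t * Q)"
      by (simp add: algebra_simps power2_eq_square)
    then show ?thesis using t by simp
  qed
  have "f a - f y \<le> e" if e: "0 < e" for e
  proof -
    define t where "t = min 1 (e / (Q + 1))"
    have t: "0 < t" "t \<le> 1" using Q e by (simp_all add: t_def)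
    have "t * Q \<le> e / (Q + 1) * Q" using Q by (intro mult_right_mono) (auto simp: t_def)
    also have "\<dots> \<le> e" using Q e by (simp add: field_simps)
    finally show ?thesis using le_t[OF t] by linarith
  qed
  then show ?thesis using field_le_epsilon[of "f a - f y" 0] by simp
qed

section \<open>Brouwer's fixed point theorem for finitely supported functions\<close>

definition cball_on :: "'i set \<Rightarrow> real \<Rightarrow> ('i \<Rightarrow> real) set" where
  "cball_on I r = {x \<in> supported_on I. (\<Sum>i\<in>I. (x i)\<^sup>2) \<le> r\<^sup>2}"

definition sphere_on :: "'i set \<Rightarrow> real \<Rightarrow> ('i \<Rightarrow> real) set" where
  "sphere_on I r = {x \<in> supported_on I. (\<Sum>i\<in>I. (x i)\<^sup>2) = r\<^sup>2}"

lemma sphere_on_subset_cball_on: "sphere_on I r \<subseteq> cball_on I r"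
  by (auto simp: sphere_on_def cball_on_def)

lemma contractible_space_cball_on: "contractible_space (top_of_set (cball_on I r))"
proof -
  let ?h = "\<lambda>z::real \<times> ('i \<Rightarrow> real). \<lambda>i. (1 - fst z) * snd z i"
  have "continuous_on ({0..1} \<times> cball_on I r) ?h"
    by (intro continuous_intros)
  moreover have "?h ` ({0..1} \<times> cball_on I r) \<subseteq> cball_on I r"
  proof clarsimp
    fix t :: real and x assume t: "0 \<le> t" "t \<le> 1" and x: "x \<in> cball_on I r"
    have "(\<Sum>i\<in>I. ((1 - t) * x i)\<^sup>2) = (1 - t)\<^sup>2 * (\<Sum>i\<in>I. (x i)\<^sup>2)"
      by (simp add: power_mult_distrib sum_distrib_left)
    also have "\<dots> \<le> 1 * r\<^sup>2"
      using x t unfolding cball_on_def by (intro mult_mono) (auto simp: power_le_one sum_nonneg)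
    finally show "(\<lambda>i. (1 - t) * x i) \<in> cball_on I r"
      using x by (auto simp: cball_on_def supported_on_def)
  qed
  ultimately have "homotopic_with (\<lambda>x. True) (top_of_set (cball_on I r)) (top_of_set (cball_on I r))
      id (\<lambda>x. (\<lambda>i. 0))"
    unfolding homotopic_with_def
    by (intro exI[of _ ?h]) (auto simp: continuous_map_subtopology_eu)
  then show ?thesis unfolding contractible_space_def by blast
qed

lemma not_contractible_space_sphere_on:
  assumes "finite I" "I \<noteq> {}" "0 < r"
  shows "\<not> contractible_space (top_of_set (sphere_on I r))"
proof -
  define n where "n = card I - 1"
  have card: "card I = Suc n" using assms(1,2) by (simp add: n_def card_gt_0_iff)
  obtain idx where idx: "bij_betw idx {..n} I"
    using ex_bij_betw_nat_finite[OF assms(1)] card by (auto simp: lessThan_Suc_atMost atLeast0LessThan)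
  define iv where "iv = the_inv_into {..n} idx"
  have iv: "iv a \<le> n" "idx (iv a) = a" if "a \<in> I" for a
    using that idx the_inv_into_into[of idx "{..n}" a] f_the_inv_into_f_bij_betw[OF idx]
    by (auto simp: iv_def bij_betw_def)
  have iv_idx: "iv (idx i) = i" if "i \<le> n" for i
    using that idx by (auto simp: iv_def bij_betw_def the_inv_into_f_f)
  have idx_in: "idx i \<in> I" if "i \<le> n" for i using that idx by (auto simp: bij_betw_def)
  have sum_reindex: "(\<Sum>a\<in>I. g a) = (\<Sum>i\<le>n. g (idx i))" for g :: "'a \<Rightarrow> real"
    using sum.reindex_bij_betw[OF idx, of g] by simp
  define Sn where "Sn = {x::nat \<Rightarrow> real. (\<Sum>i\<le>n. (x i)\<^sup>2) = 1 \<and> (\<forall>i>n. x i = 0)}"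
  have nsphere: "nsphere n = top_of_set Sn"
    by (simp add: nsphere euclidean_product_topology Sn_def)
  define \<phi> where "\<phi> x = (\<lambda>a. if a \<in> I then r * x (iv a) else 0)" for x :: "nat \<Rightarrow> real"
  define \<psi> where "\<psi> y = (\<lambda>i. if i \<le> n then y (idx i) / r else 0)" for y :: "'a \<Rightarrow> real"
  have "continuous_on Sn \<phi>"
  proof (rule continuous_on_coordinatewise_then_product)
    fix a show "continuous_on Sn (\<lambda>x. \<phi> x a)"
      by (cases "a \<in> I") (simp_all add: \<phi>_def continuous_on_coordinate continuous_on_mult_left)
  qed
  moreover have "continuous_on (sphere_on I r) \<psi>"
  proof (rule continuous_on_coordinatewise_then_product)
    fix i show "continuous_on (sphere_on I r) (\<lambda>y. \<psi> y i)"
      using assms(3) by (cases "i \<le> n") (auto simp: \<psi>_def intro!: continuous_intros)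
  qed
  moreover have "\<phi> x \<in> sphere_on I r" if "x \<in> Sn" for x
  proof -
    have "(\<Sum>a\<in>I. (\<phi> x a)\<^sup>2) = r\<^sup>2 * (\<Sum>i\<le>n. (x i)\<^sup>2)"
      unfolding sum_reindex sum_distrib_left
      by (rule sum.cong) (auto simp: \<phi>_def idx_in iv_idx power_mult_distrib)
    then show ?thesis using that by (simp add: sphere_on_def supported_on_def Sn_def \<phi>_def)
  qed
  moreover have "\<psi> y \<in> Sn" if "y \<in> sphere_on I r" for y
  proof -
    have "(\<Sum>i\<le>n. (\<psi> y i)\<^sup>2) = (\<Sum>a\<in>I. (y a)\<^sup>2) / r\<^sup>2"
      unfolding sum_reindex sum_divide_distrib
      by (rule sum.cong) (auto simp: \<psi>_def power_divide)
    then show ?thesis using that assms(3) by (simp add: sphere_on_def Sn_def \<psi>_def)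
  qed
  moreover have "\<psi> (\<phi> x) = x" if "x \<in> Sn" for x
    using that assms(3) by (auto simp: fun_eq_iff \<psi>_def \<phi>_def idx_in iv_idx Sn_def)
  moreover have "\<phi> (\<psi> y) = y" if "y \<in> sphere_on I r" for y
    using that assms(3) by (auto simp: fun_eq_iff \<psi>_def \<phi>_def iv sphere_on_def supported_on_def)
  ultimately have "homeomorphic_maps (nsphere n) (top_of_set (sphere_on I r)) \<phi> \<psi>"
    unfolding homeomorphic_maps_def nsphere by (auto simp: continuous_map_subtopology_eu)
  then show ?thesis
    using homeomorphic_space_contractibility non_contractible_space_nsphere homeomorphic_space_def
    by blast
qed

text \<open>The parameter \<open>t \<ge> 0\<close> at which the ray \<open>x + t d\<close> leaves the ball of radius \<open>r\<close>: the larger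
  root of a quadratic equation in \<open>t\<close>.\<close>

definition ray_exit :: "'i set \<Rightarrow> real \<Rightarrow> ('i \<Rightarrow> real) \<Rightarrow> ('i \<Rightarrow> real) \<Rightarrow> real" where
  "ray_exit I r x d =
    (let a = (\<Sum>i\<in>I. (d i)\<^sup>2); b = 2 * (\<Sum>i\<in>I. x i * d i); c = (\<Sum>i\<in>I. (x i)\<^sup>2) - r\<^sup>2
     in (- b + sqrt (discrim a b c)) / (2 * a))"

lemma sum_squares_ray_exit:
  assumes "0 < (\<Sum>i\<in>I. (d i)\<^sup>2)" "(\<Sum>i\<in>I. (x i)\<^sup>2) \<le> r\<^sup>2"
  shows "(\<Sum>i\<in>I. (x i + ray_exit I r x d * d i)\<^sup>2) = r\<^sup>2"
proof -
  define a where "a = (\<Sum>i\<in>I. (d i)\<^sup>2)"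
  define b where "b = 2 * (\<Sum>i\<in>I. x i * d i)"
  define c where "c = (\<Sum>i\<in>I. (x i)\<^sup>2) - r\<^sup>2"
  define t where "t = ray_exit I r x d"
  have a: "0 < a" and "c \<le> 0" using assms by (simp_all add: a_def c_def)
  then have "4 * a * c \<le> 0" by (simp add: mult_nonneg_nonpos)
  then have "0 \<le> discrim a b c"
    using zero_le_power2[of b] unfolding discrim_def by linarith
  then have root: "a * t\<^sup>2 + b * t + c = 0"
    using discriminant_nonneg[of a b c t] a
    by (simp add: t_def ray_exit_def a_def b_def c_def Let_def)
  have "(\<Sum>i\<in>I. (x i + t * d i)\<^sup>2) = (\<Sum>i\<in>I. (x i)\<^sup>2 + t * (2 * (x i * d i)) + t\<^sup>2 * (d i)\<^sup>2)"
    by (rule sum.cong) (simp_all add: power2_eq_square algebra_simps)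
  also have "\<dots> = a * t\<^sup>2 + b * t + c + r\<^sup>2"
    by (simp add: a_def b_def c_def sum.distrib sum_distrib_left algebra_simps)
  finally show ?thesis using root by (simp add: t_def)
qed

lemma ray_exit_eq_0:
  assumes "(\<Sum>i\<in>I. (x i)\<^sup>2) = r\<^sup>2" "0 \<le> (\<Sum>i\<in>I. x i * d i)"
  shows "ray_exit I r x d = 0"
  using assms by (simp add: ray_exit_def discrim_def Let_def)

lemma sphere_on_retract_of_cball_on:
  assumes I: "finite I"
    and f: "continuous_on (cball_on I r) f" "f \<in> cball_on I r \<rightarrow> cball_on I r"
    and no_fix: "\<forall>x\<in>cball_on I r. f x \<noteq> x"
  shows "sphere_on I r retract_of cball_on I r"
proof -
  let ?B = "cball_on I r"
  define d where "d x = (\<lambda>i. x i - f x i)" for x :: "'a \<Rightarrow> real"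
  define \<rho> where "\<rho> x = (\<lambda>i. x i + ray_exit I r x (d x) * d x i)" for x
  have fB: "f x \<in> ?B" if "x \<in> ?B" for x using f(2) that by blast
  have d_pos: "0 < (\<Sum>i\<in>I. (d x i)\<^sup>2)" if x: "x \<in> ?B" for x
  proof -
    have "x \<noteq> f x" using no_fix x by force
    then have "0 < sqdist_on I x (f x)"
      using x fB[OF x] by (intro sqdist_on_pos[OF I]) (simp_all add: cball_on_def)
    then show ?thesis by (simp add: d_def sqdist_on_def)
  qed
  have "continuous_on ?B \<rho>"
  proof -
    have d: "continuous_on ?B (\<lambda>x. d x i)" for i
      unfolding d_def using continuous_on_product_then_coordinatewise[OF f(1)]
      by (intro continuous_intros)
    then have "continuous_on ?B (\<lambda>x. ray_exit I r x (d x))"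
      unfolding ray_exit_def Let_def discrim_def using d_pos by (intro continuous_intros) force+
    with d show ?thesis
      unfolding \<rho>_def by (intro continuous_on_coordinatewise_then_product continuous_intros)
  qed
  moreover have "\<rho> x \<in> sphere_on I r" if x: "x \<in> ?B" for x
    using sum_squares_ray_exit[OF d_pos[OF x]] x fB[OF x]
    by (auto simp: sphere_on_def cball_on_def supported_on_def \<rho>_def d_def)
  moreover have "\<rho> x = x" if x: "x \<in> sphere_on I r" for x
  proof -
    have fx: "f x \<in> ?B" using x sphere_on_subset_cball_on fB by blast
    have "(\<Sum>i\<in>I. x i * f x i) \<le> (\<Sum>i\<in>I. ((x i)\<^sup>2 + (f x i)\<^sup>2) / 2)"
    proof (rule sum_mono)
      fix i show "x i * f x i \<le> ((x i)\<^sup>2 + (f x i)\<^sup>2) / 2"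
        using sum_squares_bound[of "x i" "f x i"] by simp
    qed
    also have "\<dots> \<le> r\<^sup>2"
      using x fx by (simp add: sum.distrib sphere_on_def cball_on_def flip: sum_divide_distrib)
    finally have "0 \<le> (\<Sum>i\<in>I. x i * d x i)"
      using x by (simp add: d_def right_diff_distrib sum_subtractf sphere_on_def power2_eq_square)
    with x have "ray_exit I r x (d x) = 0" by (intro ray_exit_eq_0) (simp add: sphere_on_def)
    then show ?thesis by (simp add: \<rho>_def)
  qed
  ultimately show ?thesis
    unfolding retract_of_def retraction_def using sphere_on_subset_cball_on by blast
qed

theorem brouwer_cball_on:
  assumes "finite I" "0 < r"
    and "continuous_on (cball_on I r) f" "f \<in> cball_on I r \<rightarrow> cball_on I r"
  shows "\<exists>x\<in>cball_on I r. f x = x"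
proof (cases "I = {}")
  case True
  then have "cball_on I r = {\<lambda>i. 0}" using assms(2) by (auto simp: cball_on_def supported_on_def)
  then show ?thesis using assms(4) by auto
next
  case False
  show ?thesis
  proof (rule ccontr)
    assume "\<not> ?thesis"
    then obtain \<rho> where "retraction (cball_on I r) (sphere_on I r) \<rho>"
      using sphere_on_retract_of_cball_on[OF assms(1,3,4)] by (auto simp: retract_of_def)
    then have "retraction_map (top_of_set (cball_on I r)) (top_of_set (sphere_on I r)) \<rho>"
      by (auto simp: retraction_def retraction_map_def retraction_maps_def
          continuous_map_subtopology_eu intro!: exI[of _ id])
    then have "contractible_space (top_of_set (sphere_on I r))"
      using contractible_space_retraction_map_image contractible_space_cball_on by blast
    with not_contractible_space_sphere_on[OF assms(1) False assms(2)] show False ..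
  qed
qed

theorem brouwer_supported_on:
  assumes I: "finite I" and K: "compact K" "fconvex K" "K \<noteq> {}" "K \<subseteq> supported_on I"
    and f: "continuous_on K f" "f \<in> K \<rightarrow> K"
  shows "\<exists>x\<in>K. f x = x"
proof -
  have "continuous_on K (\<lambda>x. \<Sum>i\<in>I. (x i)\<^sup>2)" by (intro continuous_intros)
  then obtain z where "\<forall>x\<in>K. (\<Sum>i\<in>I. (x i)\<^sup>2) \<le> (\<Sum>i\<in>I. (z i)\<^sup>2)"
    using continuous_attains_sup[OF K(1,3)] by blast
  moreover define r where "r = 1 + (\<Sum>i\<in>I. (z i)\<^sup>2)"
  moreover have "1 \<le> r" by (simp add: r_def sum_nonneg)
  moreover from this have "r \<le> r\<^sup>2" by (simp add: power2_eq_square)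
  ultimately have r: "0 < r" and K_ball: "K \<subseteq> cball_on I r"
    using K(4) by (force simp: cball_on_def)+
  define \<rho> where "\<rho> x = prox I K (\<lambda>y. 0) x" for x
  have zero_convex: "fconvex_on K (\<lambda>y. 0)" by (simp add: fconvex_on_def)
  have \<rho>_argmin: "is_arg_min (\<lambda>y. 0 + sqdist_on I y x) (\<lambda>y. y \<in> K) (\<rho> x)" for x
    unfolding \<rho>_def by (rule is_arg_min_prox[OF K(1,3)]) simp
  have "K retract_of cball_on I r"
    unfolding retract_of_def retraction_def
  proof (intro exI conjI ballI)
    show "continuous_on (cball_on I r) \<rho>"
      unfolding \<rho>_def using continuous_on_prox[OF I K(1,2,4,3), of "cball_on I r" "\<lambda>x y. 0" "\<lambda>x. x"]
      by (simp add: zero_convex continuous_on_id)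
    show "\<rho> \<in> cball_on I r \<rightarrow> K" using \<rho>_argmin by (simp add: is_arg_min_def)
    show "\<rho> x = x" if "x \<in> K" for x
    proof (rule is_arg_min_prox_unique[OF I K(2,4) zero_convex \<rho>_argmin])
      show "is_arg_min (\<lambda>y. 0 + sqdist_on I y x) (\<lambda>y. y \<in> K) x"
        using that by (simp add: is_arg_min_linorder sqdist_on_nonneg)
    qed
  qed (rule K_ball)
  then show ?thesis
    using retract_fixpoint_property brouwer_cball_on[OF I r] f by metis
qed

lemma supported_on_bounded_closed_imp_compact:
  assumes "finite I" "closed K" "K \<subseteq> supported_on I" "\<And>x i. x \<in> K \<Longrightarrow> \<bar>x i\<bar> \<le> c"
  shows "compact K"
proof -
  define S where "S i = (if i \<in> I then {-c..c} else {0::real})" for i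
  have "compactin (product_topology (\<lambda>_. euclidean) UNIV) (PiE UNIV S)"
    unfolding compactin_PiE by (auto simp: S_def compactin_euclidean_iff)
  then have "compact (PiE UNIV S)"
    by (simp add: euclidean_product_topology compactin_euclidean_iff)
  moreover have "K = PiE UNIV S \<inter> K"
    using assms(3,4) by (force simp: S_def PiE_iff supported_on_def abs_le_iff)
  ultimately show ?thesis using assms(2) by (metis compact_Int_closed)
qed

section \<open>Prelec weighting of log-convex probabilities\<close>

lemma concave_on_powr:
  fixes a :: real
  assumes a: "0 < a" "a \<le> 1"
  shows "concave_on {0..} (\<lambda>x. x powr a)"
proof (rule concave_on_linorderI)
  fix t x y :: real assume t: "0 < t" "t < 1" and xy: "x \<in> {0..}" "y \<in> {0..}" "x < y"
  define w where "w = (1 - t) * x + t * y"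
  have w: "0 < w" using t xy by (simp add: w_def add_nonneg_pos)
  have tangent: "z powr a \<le> w powr a * (a * (z / w) + (1 - a))" if "0 \<le> z" for z
  proof (cases "z = 0")
    case False
    have "(z / w) powr a * 1 powr (1 - a) \<le> a * (z / w) + (1 - a) * 1"
      using a w that False by (intro Youngs_inequality_0) auto
    then have "z powr a / w powr a \<le> a * (z / w) + (1 - a)"
      using w that by (simp add: powr_divide)
    then show ?thesis using w by (simp add: divide_le_eq mult.commute)
  qed (use a w in simp)
  have "(1 - t) * x powr a + t * y powr a
        \<le> (1 - t) * (w powr a * (a * (x / w) + (1 - a))) + t * (w powr a * (a * (y / w) + (1 - a)))"
    using tangent xy t by (intro add_mono mult_left_mono) auto
  also have "\<dots> = w powr a * (a * (((1 - t) * x + t * y) / w) + (1 - a))"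
    using w by (simp add: field_simps)
  also have "\<dots> = w powr a" using w by (simp add: w_def)
  finally show "(1 - t) * x powr a + t * y powr a \<le> ((1 - t) *\<^sub>R x + t *\<^sub>R y) powr a"
    by (simp add: w_def)
qed simp

lemma log_convex_nonneg_shift:
  assumes "log_convex_nonneg f" "0 \<le> c"
  shows "log_convex_nonneg (\<lambda>t. f (t + c))"
  unfolding log_convex_nonneg_def
proof (intro conjI allI impI convex_onI)
  fix t x y :: real assume "0 < t" "t < 1" "x \<in> {0..}" "y \<in> {0..}"
  then have "ln (f ((1 - t) *\<^sub>R (x + c) + t *\<^sub>R (y + c))) \<le> (1 - t) * ln (f (x + c)) + t * ln (f (y + c))"
    using assms by (intro convex_onD[of "{0..}"]) (auto simp: log_convex_nonneg_def)
  then show "ln (f ((1 - t) *\<^sub>R x + t *\<^sub>R y + c)) \<le> (1 - t) * ln (f (x + c)) + t * ln (f (y + c))"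
    by (simp add: algebra_simps)
qed (use assms in \<open>auto simp: log_convex_nonneg_def\<close>)

lemma convex_on_ln_prelec:
  assumes \<alpha>: "0 < \<alpha>" "\<alpha> \<le> 1" and q: "log_convex_nonneg q" "\<forall>t\<ge>0. q t \<le> 1"
  shows "convex_on {0..} (\<lambda>t. ln (prelec \<alpha> (q t)))"
proof (rule convex_onI)
  fix t x y :: real assume t: "0 < t" "t < 1" and xy: "x \<in> {0..}" "y \<in> {0..}"
  define g where "g z = - ln (q z)" for z
  have g_nonneg: "0 \<le> g z" if "0 \<le> z" for z
    using q that by (simp add: g_def log_convex_nonneg_def)
  have "ln (q ((1 - t) *\<^sub>R x + t *\<^sub>R y)) \<le> (1 - t) * ln (q x) + t * ln (q y)"
    using q(1) t xy by (intro convex_onD[of "{0..}"]) (auto simp: log_convex_nonneg_def)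
  then have g_concave: "(1 - t) * g x + t * g y \<le> g ((1 - t) * x + t * y)"
    by (simp add: g_def)
  have "(1 - t) * g x powr \<alpha> + t * g y powr \<alpha> \<le> ((1 - t) * g x + t * g y) powr \<alpha>"
    using concave_onD[OF concave_on_powr[OF \<alpha>], of t "g x" "g y"] t xy g_nonneg by simp
  also have "\<dots> \<le> g ((1 - t) * x + t * y) powr \<alpha>"
    using g_concave g_nonneg t xy \<alpha> by (intro powr_mono2) auto
  finally show "ln (prelec \<alpha> (q ((1 - t) *\<^sub>R x + t *\<^sub>R y)))
      \<le> (1 - t) * ln (prelec \<alpha> (q x)) + t * ln (prelec \<alpha> (q y))"
    by (simp add: prelec_def g_def)
qed simp

lemma fconvex_on_prod_log_convex:
  fixes w :: "'e \<Rightarrow> real \<Rightarrow> real"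
  assumes "finite P" "\<And>e t. e \<in> P \<Longrightarrow> 0 \<le> t \<Longrightarrow> 0 < w e t"
    and "\<And>e. e \<in> P \<Longrightarrow> convex_on {0..} (\<lambda>t. ln (w e t))"
  shows "fconvex_on {z. \<forall>e\<in>P. 0 \<le> z e} (\<lambda>z. \<Prod>e\<in>P. w e (z e))"
  unfolding fconvex_on_def
proof (intro ballI allI impI)
  fix x y :: "'e \<Rightarrow> real" and t :: real
  assume x: "x \<in> {z. \<forall>e\<in>P. 0 \<le> z e}" and y: "y \<in> {z. \<forall>e\<in>P. 0 \<le> z e}"
    and t: "0 \<le> t" "t \<le> 1"
  have prod_exp: "(\<Prod>e\<in>P. w e (z e)) = exp (\<Sum>e\<in>P. ln (w e (z e)))" if "\<forall>e\<in>P. 0 \<le> z e" for z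
    using that assms(1,2) by (simp add: exp_sum)
  have "(\<Sum>e\<in>P. ln (w e (mix t x y e))) \<le> (\<Sum>e\<in>P. t * ln (w e (x e)) + (1 - t) * ln (w e (y e)))"
  proof (rule sum_mono)
    fix e assume e: "e \<in> P"
    show "ln (w e (mix t x y e)) \<le> t * ln (w e (x e)) + (1 - t) * ln (w e (y e))"
      using convex_onD[OF assms(3)[OF e], of "1 - t" "x e" "y e"] x y t e
      by (simp add: mix_def algebra_simps)
  qed
  also have "\<dots> = t * (\<Sum>e\<in>P. ln (w e (x e))) + (1 - t) * (\<Sum>e\<in>P. ln (w e (y e)))"
    by (simp add: sum.distrib sum_distrib_left)
  finally have "exp (\<Sum>e\<in>P. ln (w e (mix t x y e)))
      \<le> exp (t * (\<Sum>e\<in>P. ln (w e (x e))) + (1 - t) * (\<Sum>e\<in>P. ln (w e (y e))))"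
    by simp
  also have "\<dots> \<le> t * exp (\<Sum>e\<in>P. ln (w e (x e))) + (1 - t) * exp (\<Sum>e\<in>P. ln (w e (y e)))"
    using convex_onD[OF exp_convex, of "1 - t"] t by simp
  finally show "(\<Prod>e\<in>P. w e (mix t x y e))
      \<le> t * (\<Prod>e\<in>P. w e (x e)) + (1 - t) * (\<Prod>e\<in>P. w e (y e))"
    using x y t prod_exp[of x] prod_exp[of y] prod_exp[of "mix t x y"]
    by (simp add: mix_def)
qed

lemma continuous_on_prelec:
  assumes "continuous_on S q" "\<And>x. x \<in> S \<Longrightarrow> 0 < q x \<and> q x \<le> 1" "0 < \<alpha>"
  shows "continuous_on S (\<lambda>x. prelec \<alpha> (q x))"
proof -
  have "\<forall>x\<in>S. q x \<noteq> 0" using assms(2) by force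
  with assms(1) have "continuous_on S (\<lambda>x. - ln (q x))"
    by (intro continuous_on_minus continuous_on_ln)
  then have powr: "continuous_on S (\<lambda>x. (- ln (q x)) powr \<alpha>)"
    using assms(2,3) by (intro continuous_on_powr' continuous_on_const) auto
  show ?thesis unfolding prelec_def by (intro continuous_on_exp continuous_on_minus powr)
qed

lemma strategiesD:
  assumes "y \<in> strategies E b"
  shows "0 \<le> y e" "e \<notin> E \<Longrightarrow> y e = 0" "sum y E \<le> b"
  using assms unfolding strategies_def by blast+

lemma strategies_subset_supported_on: "strategies E b \<subseteq> supported_on E"
  using strategiesD(2) by (auto simp: supported_on_def)

lemma strategies_le_budget:
  assumes "finite E" "y \<in> strategies E b"
  shows "y e \<le> b"
proof -
  have "y e \<le> sum y E"
  proof (cases "e \<in> E")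
    case True
    then show ?thesis using strategiesD(1)[OF assms(2)] assms(1) by (intro member_le_sum) auto
  next
    case False
    then show ?thesis using strategiesD[OF assms(2)] by (simp add: sum_nonneg)
  qed
  with strategiesD(3)[OF assms(2)] show ?thesis by linarith
qed

lemma closed_strategies: "closed (strategies E b)"
proof -
  have "strategies E b = (\<Inter>e. {y. 0 \<le> y e}) \<inter> (\<Inter>e\<in>-E. {y. y e = 0}) \<inter> {y. sum y E \<le> b}"
    by (auto simp: strategies_def)
  moreover have "closed {y. sum y E \<le> b}"
    by (intro closed_Collect_le continuous_intros)
  ultimately show ?thesis
    by (auto intro!: closed_Collect_le closed_Collect_eq continuous_intros)
qed

lemma compact_strategies:
  assumes "finite E"
  shows "compact (strategies E b)"
proof (rule supported_on_bounded_closed_imp_compact[OF assms closed_strategies strategies_subset_supported_on])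
  fix y e assume "y \<in> strategies E b"
  then have "0 \<le> y e" "y e \<le> b" using strategiesD(1) strategies_le_budget[OF assms] by blast+
  then show "\<bar>y e\<bar> \<le> b" by simp
qed

lemma fconvex_strategies: "fconvex (strategies E b)"
  unfolding fconvex_def
proof (intro ballI allI impI)
  fix x y and t :: real assume xy: "x \<in> strategies E b" "y \<in> strategies E b" and t: "0 \<le> t" "t \<le> 1"
  have "sum (mix t x y) E = t * sum x E + (1 - t) * sum y E"
    by (simp add: mix_def sum.distrib sum_distrib_left)
  also have "\<dots> \<le> t * b + (1 - t) * b"
    using t strategiesD(3)[OF xy(1)] strategiesD(3)[OF xy(2)] by (intro add_mono mult_left_mono) auto
  finally have "sum (mix t x y) E \<le> b" by (simp add: algebra_simps)
  moreover have "0 \<le> mix t x y e" for e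
    using t strategiesD(1)[OF xy(1)] strategiesD(1)[OF xy(2)] by (simp add: mix_def)
  moreover have "mix t x y e = 0" if "e \<notin> E" for e
    using that strategiesD(2)[OF xy(1)] strategiesD(2)[OF xy(2)] by (simp add: mix_def)
  ultimately show "mix t x y \<in> strategies E b" by (simp add: strategies_def)
qed

lemma zero_in_strategies: "0 \<le> b \<Longrightarrow> (\<lambda>e. 0) \<in> strategies E b"
  by (simp add: strategies_def)

definition profiles ::
  "('v \<times> 'v) set \<Rightarrow> 'd set \<Rightarrow> ('d \<Rightarrow> real) \<Rightarrow> ('d \<times> ('v \<times> 'v) \<Rightarrow> real) set"
  where "profiles E D B =
    {u. (\<forall>k\<in>D. curry u k \<in> strategies E (B k)) \<and> (\<forall>k. k \<notin> D \<longrightarrow> curry u k = (\<lambda>e. 0))}"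

lemma profiles_subset_supported_on: "profiles E D B \<subseteq> supported_on (D \<times> E)"
  using strategies_subset_supported_on
  by (fastforce simp: profiles_def supported_on_def curry_def fun_eq_iff)

lemma closed_profiles: "closed (profiles E D B)"
proof -
  have "profiles E D B = (\<Inter>k\<in>D. (\<lambda>u. curry u k) -` strategies E (B k)) \<inter>
                         (\<Inter>k\<in>-D. \<Inter>e. {u. u (k, e) = 0})"
    by (auto simp: profiles_def fun_eq_iff)
  then show ?thesis
    by (auto intro!: closed_vimage closed_strategies closed_Collect_eq continuous_intros)
qed

lemma compact_profiles:
  fixes E :: "('v \<times> 'v) set" and D :: "'d set"
  assumes "finite D" "finite E"
  shows "compact (profiles E D B)"
proof (rule supported_on_bounded_closed_imp_compact[OF _ closed_profiles profiles_subset_supported_on])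
  show "finite (D \<times> E)" using assms by simp
  fix u and i :: "'d \<times> 'v \<times> 'v" assume u: "u \<in> profiles E D B"
  obtain k e where i: "i = (k, e)" by (cases i)
  show "\<bar>u i\<bar> \<le> Max (insert 0 (B ` D))"
  proof (cases "k \<in> D")
    case True
    then have "curry u k \<in> strategies E (B k)" using u by (simp add: profiles_def)
    then have "0 \<le> curry u k e" "curry u k e \<le> B k"
      using strategiesD(1) strategies_le_budget[OF assms(2)] by blast+
    then have "0 \<le> u i" "u i \<le> B k" by (simp_all add: i)
    moreover have "B k \<le> Max (insert 0 (B ` D))" using True assms(1) by simp
    ultimately show ?thesis by simp
  next
    case False
    then have "curry u k = (\<lambda>e. 0)" using u by (simp add: profiles_def)
    then have "u i = 0" unfolding i by (metis curry_conv)
    then show ?thesis using assms(1) by simp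
  qed
qed

lemma fconvex_profiles: "fconvex (profiles E D B)"
  unfolding fconvex_def
proof (intro ballI allI impI)
  fix u v and t :: real
  assume uv: "u \<in> profiles E D B" "v \<in> profiles E D B" and t: "0 \<le> t" "t \<le> 1"
  have "mix t (curry u k) (curry v k) \<in> strategies E (B k)" if "k \<in> D" for k
    using uv that by (intro fconvexD[OF fconvex_strategies _ _ t]) (simp_all add: profiles_def)
  moreover have "mix t (curry u k) (curry v k) = (\<lambda>e. 0)" if "k \<notin> D" for k
    using uv that by (simp add: profiles_def)
  ultimately show "mix t u v \<in> profiles E D B" by (simp add: profiles_def curry_mix)
qed

lemma zero_in_profiles: "\<forall>k\<in>D. 0 \<le> B k \<Longrightarrow> (\<lambda>i. 0) \<in> profiles E D B"
  by (simp add: profiles_def curry_def zero_in_strategies)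

lemma paths_subset_edges:
  assumes "P \<in> paths E s t"
  shows "P \<subseteq> E"
proof
  fix z assume "z \<in> P"
  then obtain vs i where vs: "is_path E s t vs" and i: "i < min (length vs) (length (tl vs))"
    and z: "z = (vs ! i, tl vs ! i)"
    using assms by (auto simp: paths_def path_edges_def set_zip)
  then have "Suc i < length vs" by auto
  then show "z \<in> E" using vs z by (auto simp: is_path_def nth_tl)
qed

lemma finite_paths:
  assumes "finite E"
  shows "finite (paths E s t)"
proof (rule finite_subset)
  show "paths E s t \<subseteq> Pow E" by (auto dest: paths_subset_edges)
qed (simp add: assms)

locale behavioral_security_game =
  fixes E :: "('v \<times> 'v) set" and s :: 'v and D :: "'d set" and assets :: "'d \<Rightarrow> 'v set"
    and L :: "'v \<Rightarrow> real" and B :: "'d \<Rightarrow> real" and \<alpha> :: "'d \<Rightarrow> real"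
    and p :: "('v \<times> 'v) \<Rightarrow> real \<Rightarrow> real"
  assumes finite_E: "finite E" and finite_D: "finite D"
    and loss_nonneg: "\<And>m. 0 \<le> L m"
    and budget_nonneg: "\<And>k. k \<in> D \<Longrightarrow> 0 \<le> B k"
    and paths_nonempty: "\<And>k m. k \<in> D \<Longrightarrow> m \<in> assets k \<Longrightarrow> paths E s m \<noteq> {}"
    and prob_le_1: "\<And>e t. e \<in> E \<Longrightarrow> 0 \<le> t \<Longrightarrow> p e t \<le> 1"
    and log_convex: "\<And>e. e \<in> E \<Longrightarrow> log_convex_nonneg (p e)"
    and continuous_prob: "\<And>e. e \<in> E \<Longrightarrow> continuous_on {0..} (p e)"
    and prelec_exponent: "\<And>k. k \<in> D \<Longrightarrow> 0 < \<alpha> k \<and> \<alpha> k \<le> 1"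
begin

abbreviation C :: "'d \<Rightarrow> ('d \<Rightarrow> ('v \<times> 'v) \<Rightarrow> real) \<Rightarrow> real"
  where "C \<equiv> cost E s D assets L \<alpha> p"

lemma prob_pos: "e \<in> E \<Longrightarrow> 0 \<le> t \<Longrightarrow> 0 < p e t"
  using log_convex by (simp add: log_convex_nonneg_def)

lemma total_inv_fun_upd:
  assumes "k \<in> D"
  shows "total_inv D (x(k := y)) e = y e + (\<Sum>j\<in>D-{k}. x j e)"
proof -
  have "total_inv D (x(k := y)) e = y e + (\<Sum>j\<in>D-{k}. (x(k := y)) j e)"
    unfolding total_inv_def sum.remove[OF finite_D assms] by simp
  also have "(\<Sum>j\<in>D-{k}. (x(k := y)) j e) = (\<Sum>j\<in>D-{k}. x j e)"
    by (rule sum.cong) auto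
  finally show ?thesis .
qed

lemma cost_fun_upd:
  assumes "k \<in> D"
  shows "C k (x(k := y)) = (\<Sum>m\<in>assets k. L m *
    Max ((\<lambda>P. \<Prod>e\<in>P. prelec (\<alpha> k) (p e (y e + (\<Sum>j\<in>D-{k}. x j e)))) ` paths E s m))"
  unfolding cost_def total_inv_fun_upd[OF assms] ..

lemma fconvex_on_cost:
  assumes k: "k \<in> D" and x: "\<And>j e. j \<in> D \<Longrightarrow> 0 \<le> x j e"
  shows "fconvex_on (strategies E (B k)) (\<lambda>y. C k (x(k := y)))"
proof -
  define c where "c e = (\<Sum>j\<in>D-{k}. x j e)" for e
  have c: "0 \<le> c e" for e unfolding c_def by (rule sum_nonneg) (simp add: x)
  have path: "fconvex_on (strategies E (B k)) (\<lambda>y. \<Prod>e\<in>P. prelec (\<alpha> k) (p e (y e + c e)))"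
    if P: "P \<in> paths E s m" for P m
  proof (rule fconvex_on_subset[OF fconvex_on_prod_log_convex])
    have PE: "P \<subseteq> E" using paths_subset_edges[OF P] .
    then show "finite P" using finite_E by (rule finite_subset)
    show "0 < prelec (\<alpha> k) (p e (t + c e))" for e t by (simp add: prelec_def)
    show "convex_on {0..} (\<lambda>t. ln (prelec (\<alpha> k) (p e (t + c e))))" if "e \<in> P" for e
    proof (rule convex_on_ln_prelec)
      have e: "e \<in> E" using that PE by blast
      show "log_convex_nonneg (\<lambda>t. p e (t + c e))" by (rule log_convex_nonneg_shift[OF log_convex[OF e] c])
      show "\<forall>t\<ge>0. p e (t + c e) \<le> 1" using prob_le_1[OF e] c by (simp add: add_nonneg_nonneg)
    qed (use prelec_exponent[OF k] in auto)
    show "strategies E (B k) \<subseteq> {z. \<forall>e\<in>P. 0 \<le> z e}" by (blast intro: strategiesD(1))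
  qed
  have "fconvex_on (strategies E (B k))
      (\<lambda>y. Max ((\<lambda>P. \<Prod>e\<in>P. prelec (\<alpha> k) (p e (y e + c e))) ` paths E s m))"
    if m: "m \<in> assets k" for m
    by (rule fconvex_on_Max[OF finite_paths[OF finite_E] paths_nonempty[OF k m] path])
  then have "fconvex_on (strategies E (B k)) (\<lambda>y. \<Sum>m\<in>assets k. L m *
      Max ((\<lambda>P. \<Prod>e\<in>P. prelec (\<alpha> k) (p e (y e + c e))) ` paths E s m))"
    by (rule fconvex_on_weighted_sum[OF loss_nonneg])
  then show ?thesis by (simp add: cost_fun_upd[OF k] c_def)
qed

lemma profilesD:
  assumes "u \<in> profiles E D B" "k \<in> D"
  shows "curry u k \<in> strategies E (B k)" "0 \<le> u (k, e)"
proof -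
  show u: "curry u k \<in> strategies E (B k)" using assms by (simp add: profiles_def)
  show "0 \<le> u (k, e)" using strategiesD(1)[OF u, of e] by simp
qed

lemma continuous_on_cost:
  assumes k: "k \<in> D"
  shows "continuous_on (profiles E D B \<times> strategies E (B k))
           (\<lambda>z. C k ((curry (fst z))(k := snd z)))"
proof -
  let ?S = "profiles E D B \<times> strategies E (B k)"
  let ?t = "\<lambda>e z. snd z e + (\<Sum>j\<in>D-{k}. fst z (j, e))"
  have edge: "continuous_on ?S (\<lambda>z. prelec (\<alpha> k) (p e (?t e z)))" if e: "e \<in> E" for e
  proof (rule continuous_on_prelec)
    have t_nonneg: "?t e z \<in> {0..}" if "z \<in> ?S" for z
    proof -
      have "0 \<le> snd z e" using that by (cases z) (auto intro: strategiesD(1))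
      moreover have "0 \<le> (\<Sum>j\<in>D-{k}. fst z (j, e))"
        using that by (cases z) (auto intro!: sum_nonneg profilesD(2))
      ultimately show ?thesis by simp
    qed
    moreover have "continuous_on ?S (?t e)" by (intro continuous_intros)
    ultimately show "continuous_on ?S (\<lambda>z. p e (?t e z))"
      by (intro continuous_on_compose2[OF continuous_prob[OF e]]) auto
    show "0 < p e (?t e z) \<and> p e (?t e z) \<le> 1" if "z \<in> ?S" for z
      using t_nonneg[OF that] prob_pos[OF e] prob_le_1[OF e] by auto
  qed (use prelec_exponent[OF k] in auto)
  have max_cont:
    "continuous_on ?S (\<lambda>z. Max ((\<lambda>P. \<Prod>e\<in>P. prelec (\<alpha> k) (p e (?t e z))) ` paths E s m))"
    if m: "m \<in> assets k" for m
  proof (rule continuous_on_Max[OF finite_paths[OF finite_E] paths_nonempty[OF k m]])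
    fix P assume P: "P \<in> paths E s m"
    show "continuous_on ?S (\<lambda>z. \<Prod>e\<in>P. prelec (\<alpha> k) (p e (?t e z)))"
      by (rule continuous_on_prod) (use paths_subset_edges[OF P] in \<open>blast intro: edge\<close>)
  qed
  have "continuous_on ?S (\<lambda>z. \<Sum>m\<in>assets k. L m *
      Max ((\<lambda>P. \<Prod>e\<in>P. prelec (\<alpha> k) (p e (?t e z))) ` paths E s m))"
    by (intro continuous_on_sum continuous_on_mult continuous_on_const max_cont)
  then show ?thesis by (simp add: cost_fun_upd[OF k])
qed

definition prox_response :: "'d \<Rightarrow> ('d \<times> ('v \<times> 'v) \<Rightarrow> real) \<Rightarrow> ('v \<times> 'v) \<Rightarrow> real" where
  "prox_response k u = prox E (strategies E (B k)) (\<lambda>y. C k ((curry u)(k := y))) (curry u k)"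

definition response_map :: "('d \<times> ('v \<times> 'v) \<Rightarrow> real) \<Rightarrow> 'd \<times> ('v \<times> 'v) \<Rightarrow> real" where
  "response_map u = (\<lambda>(k, e). if k \<in> D then prox_response k u e else 0)"

lemma is_arg_min_prox_response:
  assumes k: "k \<in> D" and u: "u \<in> profiles E D B"
  shows "is_arg_min (\<lambda>y. C k ((curry u)(k := y)) + sqdist_on E y (curry u k))
           (\<lambda>y. y \<in> strategies E (B k)) (prox_response k u)"
  unfolding prox_response_def
proof (rule is_arg_min_prox[OF compact_strategies[OF finite_E]])
  show "strategies E (B k) \<noteq> {}" using zero_in_strategies[OF budget_nonneg[OF k]] by blast
  have pair: "continuous_on (strategies E (B k)) (\<lambda>y. (u, y))" by (intro continuous_intros)
  have "(\<lambda>y. (u, y)) ` strategies E (B k) \<subseteq> profiles E D B \<times> strategies E (B k)"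
    using u by blast
  from continuous_on_compose2[OF continuous_on_cost[OF k] pair this]
  show "continuous_on (strategies E (B k)) (\<lambda>y. C k ((curry u)(k := y)))" by simp
qed

lemma response_map_in_profiles:
  assumes u: "u \<in> profiles E D B"
  shows "response_map u \<in> profiles E D B"
proof -
  have "curry (response_map u) k \<in> strategies E (B k)" if k: "k \<in> D" for k
  proof -
    have "prox_response k u \<in> strategies E (B k)"
      using is_arg_min_prox_response[OF k u] unfolding is_arg_min_def by blast
    moreover have "curry (response_map u) k = prox_response k u"
      using k by (simp add: fun_eq_iff response_map_def)
    ultimately show ?thesis by simp
  qed
  moreover have "curry (response_map u) k = (\<lambda>e. 0)" if "k \<notin> D" for k
    using that by (simp add: fun_eq_iff response_map_def)
  ultimately show ?thesis by (simp add: profiles_def)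
qed

lemma continuous_on_response_map: "continuous_on (profiles E D B) response_map"
proof (rule continuous_on_coordinatewise_then_product)
  fix i :: "'d \<times> ('v \<times> 'v)"
  obtain k e where i: "i = (k, e)" by (cases i)
  show "continuous_on (profiles E D B) (\<lambda>u. response_map u i)"
  proof (cases "k \<in> D")
    case k: True
    have "continuous_on (profiles E D B) (\<lambda>u. prox_response k u)"
      unfolding prox_response_def
    proof (rule continuous_on_prox[OF finite_E compact_strategies[OF finite_E] fconvex_strategies
          strategies_subset_supported_on])
      show "strategies E (B k) \<noteq> {}" using zero_in_strategies[OF budget_nonneg[OF k]] by blast
      show "continuous_on (profiles E D B \<times> strategies E (B k))
          (\<lambda>z. C k ((curry (fst z))(k := snd z)))" by (rule continuous_on_cost[OF k])
      show "fconvex_on (strategies E (B k)) (\<lambda>y. C k ((curry u)(k := y)))"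
        if "u \<in> profiles E D B" for u
        using that by (intro fconvex_on_cost[OF k]) (simp add: profilesD(2))
    qed (rule continuous_on_curry)
    then show ?thesis
      using continuous_on_product_then_coordinatewise[of _ "\<lambda>u. prox_response k u" e] k
      by (simp add: i response_map_def)
  next
    case False
    then show ?thesis by (simp add: i response_map_def)
  qed
qed

lemma response_map_has_fixed_point: "\<exists>u\<in>profiles E D B. response_map u = u"
proof (rule brouwer_supported_on)
  show "finite (D \<times> E)" using finite_D finite_E by simp
  show "compact (profiles E D B)" by (rule compact_profiles[OF finite_D finite_E])
  have "(\<lambda>i. 0) \<in> profiles E D B" by (rule zero_in_profiles) (simp add: budget_nonneg)
  then show "profiles E D B \<noteq> {}" by blast
  show "response_map \<in> profiles E D B \<rightarrow> profiles E D B"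
    by (rule funcsetI) (rule response_map_in_profiles)
qed (simp_all add: fconvex_profiles profiles_subset_supported_on continuous_on_response_map)

lemma fixed_point_is_equilibrium:
  assumes u: "u \<in> profiles E D B" "response_map u = u"
    and k: "k \<in> D" and y: "y \<in> strategies E (B k)"
  shows "C k (curry u) \<le> C k ((curry u)(k := y))"
proof -
  have "prox_response k u e = u (k, e)" for e
    using fun_cong[OF u(2), of "(k, e)"] k by (simp add: response_map_def)
  then have "prox_response k u = curry u k" by (simp add: fun_eq_iff)
  then have "is_arg_min (\<lambda>y. C k ((curry u)(k := y)) + sqdist_on E y (curry u k))
      (\<lambda>y. y \<in> strategies E (B k)) (curry u k)"
    using is_arg_min_prox_response[OF k u(1)] by simp
  then have "C k ((curry u)(k := curry u k)) \<le> C k ((curry u)(k := y))"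
    using u(1) k y
    by (intro is_arg_min_prox_center_imp_min[OF fconvex_strategies fconvex_on_cost])
      (auto simp: profilesD(2))
  then show ?thesis by simp
qed

theorem pure_nash_equilibrium_exists:
  "\<exists>x. (\<forall>k\<in>D. x k \<in> strategies E (B k)) \<and>
       (\<forall>k\<in>D. \<forall>y\<in>strategies E (B k). C k x \<le> C k (x(k := y)))"
proof -
  obtain u where u: "u \<in> profiles E D B" "response_map u = u"
    using response_map_has_fixed_point by blast
  show ?thesis
  proof (intro exI conjI ballI)
    show "curry u k \<in> strategies E (B k)" if "k \<in> D" for k by (rule profilesD(1)[OF u(1) that])
    show "C k (curry u) \<le> C k ((curry u)(k := y))" if "k \<in> D" "y \<in> strategies E (B k)" for k y
      by (rule fixed_point_is_equilibrium[OF u that])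
  qed
qed

end

lemma C2_nonneg_imp_continuous_on: "C2_nonneg f \<Longrightarrow> continuous_on {0..} f"
  unfolding C2_nonneg_def continuous_on_eq_continuous_within
  by (metis DERIV_continuous atLeast_iff)

theorem proposition4:
  fixes V :: "'v set" and E :: "('v \<times> 'v) set" and s :: 'v
    and D :: "'d set" and assets :: "'d \<Rightarrow> 'v set" and L :: "'v \<Rightarrow> real"
    and B :: "'d \<Rightarrow> real" and \<alpha> :: "'d \<Rightarrow> real"
    and p :: "('v \<times> 'v) \<Rightarrow> real \<Rightarrow> real"
  assumes "finite V" and "E \<subseteq> V \<times> V" and "s \<in> V"
    and "finite D"
    and "\<forall>k\<in>D. assets k \<subseteq> V - {s}"
    and "\<forall>m. 0 \<le> L m"
    and "\<forall>k\<in>D. 0 \<le> B k"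
    and "\<forall>k\<in>D. \<forall>m\<in>assets k. paths E s m \<noteq> {}"
    and "\<forall>e\<in>E. \<forall>x\<ge>0. 0 \<le> p e x \<and> p e x \<le> 1"
    and "\<forall>e\<in>E. 0 < p e 0"
    and "\<forall>e\<in>E. log_convex_nonneg (p e)"
    and "\<forall>e\<in>E. strictly_decreasing_nonneg (p e)"
    and "\<forall>e\<in>E. C2_nonneg (p e)"
    and "\<forall>k\<in>D. 0 < \<alpha> k \<and> \<alpha> k \<le> 1"
  shows "\<exists>xb. (\<forall>k\<in>D. xb k \<in> strategies E (B k)) \<and>
           (\<forall>k\<in>D. \<forall>y\<in>strategies E (B k).
              cost E s D assets L \<alpha> p k xb \<le> cost E s D assets L \<alpha> p k (xb(k := y)))"
proof -
  have "finite E" using assms(1,2) by (meson finite_SigmaI finite_subset)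
  interpret behavioral_security_game E s D assets L B \<alpha> p
    using \<open>finite E\<close> assms(4,6-9,11,14) C2_nonneg_imp_continuous_on assms(13)
    by unfold_locales auto
  show ?thesis by (rule pure_nash_equilibrium_exists)
qed

end
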